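(* Let $\tilde q=q^2$. For all integers $v\geq 1$ and $L\geq 0$, \[ \sum_{n_1,\ldots,n_v\geq 0} \frac{\tilde q^{\sum_{i=1}^v N_i(N_i+1)+n_v}}{(\tilde q)_{n_1}\cdots(\tilde q)_{n_{v-1}}(\tilde q)_{2n_v+1}}\,\frac{(q^3;q^6)_{n_v}}{(q;q^2)_{n_v}}\,\frac{(\tilde q)_{2L+1}}{(\tilde q)_{L-N_1}} =\sum_{j=-\infty}^{\infty} (-1)^j q^{(2v+1)j^2+2vj-1}\left(\frac{j}{3}\right){2L+1 \brack L-j}_{\tilde q}, \] where $N_i=n_i+n_{i+1}+\cdots+n_v$ for $i=1,\ldots,v$ (for $v=1$ the product $(\tilde q)_{n_1}\cdots(\tilde q)_{n_{v-1}}$ is empty).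
   Context: For a variable $a$ and integer $n\ge 0$, $(a;q)_n=(1-a)(1-aq)\cdots(1-aq^{n-1})$, and $(\tilde q)_n=(\tilde q;\tilde q)_n$; by convention $1/(\tilde q)_n=0$ for negative integers $n$. The $q$-binomial coefficient in base $\tilde q$ is ${A \brack B}_{\tilde q}=\frac{(\tilde q;\tilde q)_A}{(\tilde q;\tilde q)_B(\tilde q;\tilde q)_{A-B}}$ if $0\le B\le A$ are integers, and $0$ otherwise. $\left(\frac{j}{3}\right)$ is the Legendre symbol modulo 3: it equals $1$ if $j\equiv 1 \pmod 3$, $-1$ if $j\equiv -1\pmod 3$, and $0$ if $3\mid j$. *)

theory Defs
  imports "HOL-Analysis.Analysis" "HOL-Number_Theory.Number_Theory"
begin

definition qpoch :: "complex \<Rightarrow> complex \<Rightarrow> nat \<Rightarrow> complex" where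
  "qpoch a q n = (\<Prod>k<n. (1 - a * q ^ k))"

definition inv_qfact :: "complex \<Rightarrow> int \<Rightarrow> complex" where
  "inv_qfact tq m = (if m < 0 then 0 else inverse (qpoch tq tq (nat m)))"

definition qbinom :: "complex \<Rightarrow> int \<Rightarrow> int \<Rightarrow> complex" where
  "qbinom tq A B = (if 0 \<le> B \<and> B \<le> A
      then qpoch tq tq (nat A) / (qpoch tq tq (nat B) * qpoch tq tq (nat (A - B)))
      else 0)"

end

theory Submission
  imports Defs
begin

text \<open>
  Write \<open>p = q^2\<close>. The finite Jacobi triple product, evaluated at \<open>z = -\<omega>\<close> and
  \<open>z = -\<omega>^2\<close> for a primitive cube root of unity \<open>\<omega>\<close>, shows that
  \<open>\<alpha>_j = (-1)^j (j/3) q^(j^2 - 1)\<close> and \<open>\<beta>_L = q^(2L) (q^3;q^6)_L / ((q;q^2)_L (p;p)_(2L+1))\<close>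
  form a Bailey pair relative to \<open>a = p\<close>. The Bailey lemma with both parameters sent to
  infinity maps it to another Bailey pair, multiplying \<open>\<alpha>_j\<close> by \<open>p^(j^2 + j)\<close> and replacing
  \<open>\<beta>_L\<close> by \<open>\<Sum>_M p^(M^2 + M) \<beta>_M / (p;p)_(L-M)\<close>. After \<open>v\<close> iterations the new \<open>\<beta>_L\<close>
  unfolds into the \<open>v\<close>-fold sum on the left, the summation indices of the iterations being
  \<open>N_1, \<dots>, N_v\<close>, while the new \<open>\<alpha>\<close> produces the sum on the right.
\<close>

section \<open>q-Pochhammer symbols and q-binomial coefficients\<close>

lemma qpoch_0 [simp]: "qpoch a b 0 = 1"
  by (simp add: qpoch_def)

lemma qpoch_Suc: "qpoch a b (Suc n) = qpoch a b n * (1 - a * b ^ n)"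
  by (simp add: qpoch_def lessThan_Suc mult.commute)

lemma qpoch_add: "qpoch a b (m + n) = qpoch a b m * qpoch (a * b ^ m) b n"
  by (induction n) (simp_all add: qpoch_Suc power_add mult.assoc)

lemma qpoch_Suc_left: "qpoch a b (Suc n) = (1 - a) * qpoch (a * b) b n"
  using qpoch_add[of a b 1 n] by (simp add: qpoch_Suc)

lemma qpoch_0_left: "qpoch 0 b n = 1"
  by (simp add: qpoch_def)

lemma qpoch_nonzero:
  assumes "norm a < 1" "norm b \<le> 1"
  shows "qpoch a b n \<noteq> 0"
proof -
  have "norm (a * b ^ k) < 1" for k
  proof -
    have "norm (a * b ^ k) = norm a * norm b ^ k"
      by (simp add: norm_mult norm_power)
    also have "\<dots> \<le> norm a"
      using assms(2) by (intro mult_left_le) (simp_all add: power_le_one)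
    finally show ?thesis
      using assms(1) by simp
  qed
  then have "1 - a * b ^ k \<noteq> 0" for k
    by (metis eq_iff_diff_eq_0 norm_one order_less_irrefl)
  then show ?thesis
    by (simp add: qpoch_def)
qed

lemma qpoch_self_nonzero: "norm p < 1 \<Longrightarrow> qpoch p p n \<noteq> 0"
  by (rule qpoch_nonzero) simp_all

lemma norm_power2_less_one: "norm q < 1 \<Longrightarrow> norm ((q :: complex) ^ 2) < 1"
  by (simp add: norm_power abs_square_less_1)

lemma norm_power_Suc_less_one: "norm (p :: complex) < 1 \<Longrightarrow> norm (p ^ Suc k) < 1"
  by (metis norm_power norm_ge_zero power_Suc_less_one power_0_Suc norm_zero
      less_numeral_extra(1) order_le_less)

lemma inv_qfact_of_nat [simp]: "inv_qfact p (int m) = inverse (qpoch p p m)"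
  by (simp add: inv_qfact_def)

lemma inv_qfact_neg: "m < 0 \<Longrightarrow> inv_qfact p m = 0"
  by (simp add: inv_qfact_def)

lemma qbinom_of_nat:
  "k \<le> n \<Longrightarrow> qbinom p (int n) (int k) = qpoch p p n / (qpoch p p k * qpoch p p (n - k))"
  by (simp add: qbinom_def nat_diff_distrib)

lemma qbinom_eq_0: "k < 0 \<or> n < k \<Longrightarrow> qbinom p n k = 0"
  by (auto simp: qbinom_def)

lemma qbinom_conv_inv_qfact:
  "0 \<le> n \<Longrightarrow> qbinom p n k = qpoch p p (nat n) * inv_qfact p k * inv_qfact p (n - k)"
  by (auto simp: qbinom_def inv_qfact_def divide_inverse)

lemma qbinom_odd_conv_inv_qfact:
  "qbinom p (2 * int L + 1) (int L - j) =
     qpoch p p (2 * L + 1) * inv_qfact p (int L - j) * inv_qfact p (int L + j + 1)"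
proof -
  have "0 \<le> 2 * int L + 1" "nat (2 * int L + 1) = 2 * L + 1"
    "2 * int L + 1 - (int L - j) = int L + j + 1"
    by simp_all
  then show ?thesis
    by (simp only: qbinom_conv_inv_qfact)
qed

lemma qbinom_symmetric: "qbinom p n (n - k) = qbinom p n k"
  by (auto simp: qbinom_def mult.commute)

lemma qbinom_0_right: "norm p < 1 \<Longrightarrow> 0 \<le> n \<Longrightarrow> qbinom p n 0 = 1"
  using qpoch_self_nonzero[of p] by (simp add: qbinom_def)

lemma qbinom_diag: "norm p < 1 \<Longrightarrow> 0 \<le> n \<Longrightarrow> qbinom p n n = 1"
  using qbinom_0_right qbinom_symmetric[of p n 0] by simp

text \<open>With \<open>n = m + k + 1\<close> this is \<open>1 - p^(n+1) = (1 - p^(m+1)) + p^(m+1) (1 - p^(k+1))\<close>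
  multiplied by \<open>(p;p)_n / ((p;p)_(k+1) (p;p)_(m+1))\<close>.\<close>
lemma qbinom_pascal_nat:
  assumes "norm p < 1"
  shows "qbinom p (int (m + Suc k + 1)) (int (Suc k)) =
     qbinom p (int (m + Suc k)) (int (Suc k)) + p ^ (m + 1) * qbinom p (int (m + Suc k)) (int k)"
proof -
  define X where "X = qpoch p p (m + k + 1)"
  define A where "A = qpoch p p k"
  define B where "B = qpoch p p m"
  define u where "u = p ^ (k + 1)"
  define w where "w = p ^ (m + 1)"
  have nz: "qpoch p p n \<noteq> 0" for n
    using assms by (rule qpoch_self_nonzero)
  have "1 - u \<noteq> 0" "A \<noteq> 0"
    using nz[of "Suc k"] by (auto simp: A_def u_def qpoch_Suc)
  have "1 - w \<noteq> 0" "B \<noteq> 0"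
    using nz[of "Suc m"] by (auto simp: B_def w_def qpoch_Suc)
  have e1: "qpoch p p (Suc (Suc (m + k))) = X * (1 - u * w)"
    by (simp add: X_def u_def w_def qpoch_Suc power_add[symmetric] add.commute add.left_commute)
  have e2: "qpoch p p (Suc k) = A * (1 - u)"
    by (simp add: A_def u_def qpoch_Suc)
  have e3: "qpoch p p (Suc m) = B * (1 - w)"
    by (simp add: B_def w_def qpoch_Suc)
  have e4: "qpoch p p (Suc (m + k)) = X"
    by (simp add: X_def)
  have f1: "qbinom p (int (m + Suc k + 1)) (int (Suc k)) =
      X * (1 - u * w) / (A * (1 - u) * (B * (1 - w)))"
    by (subst qbinom_of_nat) (simp_all add: e1 e2 e3[symmetric] Suc_diff_le)
  have f2: "qbinom p (int (m + Suc k)) (int (Suc k)) = X / (A * (1 - u) * B)"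
    by (subst qbinom_of_nat) (simp_all add: e2 e4 B_def)
  have f3: "qbinom p (int (m + Suc k)) (int k) = X / (A * (B * (1 - w)))"
    by (subst qbinom_of_nat) (simp_all add: e3[symmetric] e4 A_def Suc_diff_le)
  have "X * (1 - u * w) / (A * (1 - u) * (B * (1 - w))) =
      X / (A * (1 - u) * B) + w * (X / (A * (B * (1 - w))))"
    using \<open>1 - u \<noteq> 0\<close> \<open>A \<noteq> 0\<close> \<open>1 - w \<noteq> 0\<close> \<open>B \<noteq> 0\<close>
    by (simp add: divide_simps) (simp add: algebra_simps)
  then show ?thesis
    unfolding f1 f2 f3 w_def .
qed

lemma qbinom_pascal:
  assumes "norm p < 1" "0 \<le> n"
  shows "qbinom p (n + 1) k = qbinom p n k + p ^ nat (n + 1 - k) * qbinom p n (k - 1)"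
proof -
  consider "k < 0" | "k = 0" | "n + 1 < k" | "k = n + 1" | "0 < k \<and> k \<le> n"
    by linarith
  then show ?thesis
  proof cases
    case 5
    define k' where "k' = nat k - 1"
    define m where "m = nat (n - k)"
    have k: "k = int (Suc k')" and n: "n = int (m + Suc k')"
      using 5 by (simp_all add: k'_def m_def)
    then have "nat (n + 1 - k) = m + 1"
      by simp
    then show ?thesis
      using qbinom_pascal_nat[OF assms(1), of m k'] k n by (simp add: add_ac)
  qed (use assms in \<open>simp_all add: qbinom_eq_0 qbinom_0_right qbinom_diag\<close>)
qed

lemma qbinom_pascal':
  assumes "norm p < 1" "0 \<le> n"
  shows "qbinom p (n + 1) k = p ^ nat k * qbinom p n k + qbinom p n (k - 1)"
proof -
  have "qbinom p (n + 1) k = qbinom p (n + 1) (n + 1 - k)"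
    by (rule qbinom_symmetric[symmetric])
  also have "\<dots> =
      qbinom p n (n + 1 - k) + p ^ nat (n + 1 - (n + 1 - k)) * qbinom p n (n + 1 - k - 1)"
    by (rule qbinom_pascal[OF assms])
  also have "qbinom p n (n + 1 - k) = qbinom p n (k - 1)"
    using qbinom_symmetric[of p n "k - 1"] by (simp add: algebra_simps)
  also have "qbinom p n (n + 1 - k - 1) = qbinom p n k"
    using qbinom_symmetric[of p n k] by simp
  finally show ?thesis
    by simp
qed

section \<open>A finite Jacobi triple product\<close>

definition jacobi_sum :: "complex \<Rightarrow> complex \<Rightarrow> nat \<Rightarrow> nat \<Rightarrow> complex" where
  "jacobi_sum q z a b =
     (\<Sum>j\<in>{- int b..int a}. z powi j * q ^ nat (j\<^sup>2) * qbinom (q\<^sup>2) (int (a + b)) (int b + j))"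

lemma sum_int_shift: "(\<Sum>j\<in>{m + 1..n + 1}. f j) = (\<Sum>i\<in>{m..n}. f (i + 1 :: int))"
  by (rule sum.reindex_bij_witness[where i = "\<lambda>i. i + 1" and j = "\<lambda>j. j - 1"]) auto

lemma sum_int_mirror: "(\<Sum>j\<in>{- n..- m}. f j) = (\<Sum>i\<in>{m..n}. f (- i :: int))"
  by (rule sum.reindex_bij_witness[of _ "\<lambda>j. - j" "\<lambda>i. - i"]) auto

lemma power_square_shift:
  fixes q :: complex
  assumes "i \<le> int a"
  shows "q ^ nat ((i + 1)\<^sup>2) * (q\<^sup>2) ^ nat (int a - i) = q ^ (2 * a + 1) * q ^ nat (i\<^sup>2)"
proof -
  have "nat ((i + 1)\<^sup>2) + 2 * nat (int a - i) = nat ((i + 1)\<^sup>2 + 2 * (int a - i))"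
    using assms by (simp add: nat_add_distrib nat_mult_distrib)
  also have "(i + 1)\<^sup>2 + 2 * (int a - i) = int (2 * a + 1) + i\<^sup>2"
    by (simp add: power2_eq_square algebra_simps)
  also have "nat (int (2 * a + 1) + i\<^sup>2) = (2 * a + 1) + nat (i\<^sup>2)"
    by (simp add: nat_add_distrib)
  finally show ?thesis
    by (metis power_add power_mult)
qed

text \<open>Pascal's rule splits the sum for \<open>a + 1\<close> into the sum for \<open>a\<close> and a copy of it
  shifted by one in \<open>j\<close>, which carries the factor \<open>z q^(2a+1)\<close>.\<close>
lemma jacobi_sum_Suc:
  assumes q: "norm q < 1" and z: "z \<noteq> 0"
  shows "jacobi_sum q z (Suc a) b = (1 + z * q ^ (2 * a + 1)) * jacobi_sum q z a b"
proof -
  define n where "n = int (a + b)"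
  define f where "f j = z powi j * q ^ nat (j\<^sup>2) * qbinom (q\<^sup>2) n (int b + j)" for j
  define g where "g j = z powi j * q ^ nat (j\<^sup>2) *
    ((q\<^sup>2) ^ nat (n + 1 - (int b + j)) * qbinom (q\<^sup>2) n (int b + j - 1))" for j
  have "int (Suc a + b) = n + 1" "int (Suc a) = int a + 1"
    by (simp_all add: n_def)
  then have "jacobi_sum q z (Suc a) b = (\<Sum>j\<in>{- int b..int a + 1}. f j + g j)"
    unfolding jacobi_sum_def f_def g_def
    by (simp only:, intro sum.cong refl, subst qbinom_pascal[OF norm_power2_less_one[OF q]])
      (simp_all add: n_def algebra_simps)
  also have "\<dots> = (\<Sum>j\<in>{- int b..int a + 1}. f j) + (\<Sum>j\<in>{- int b + 1..int a + 1}. g j)"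
  proof -
    have "{- int b..int a + 1} = insert (- int b) {- int b + 1..int a + 1}"
      by auto
    moreover have "g (- int b) = 0"
      by (simp add: g_def qbinom_eq_0)
    ultimately show ?thesis
      by (simp add: sum.distrib)
  qed
  also have "(\<Sum>j\<in>{- int b..int a + 1}. f j) = jacobi_sum q z a b"
  proof -
    have "{- int b..int a + 1} = insert (int a + 1) {- int b..int a}"
      by auto
    moreover have "f (int a + 1) = 0"
      by (simp add: f_def n_def qbinom_eq_0)
    ultimately show ?thesis
      by (simp add: jacobi_sum_def f_def n_def)
  qed
  also have "(\<Sum>j\<in>{- int b + 1..int a + 1}. g j) = (\<Sum>i\<in>{- int b..int a}. g (i + 1))"
    by (rule sum_int_shift)
  also have "\<dots> = (\<Sum>i\<in>{- int b..int a}. z * q ^ (2 * a + 1) * f i)"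
  proof (intro sum.cong refl)
    fix i
    assume "i \<in> {- int b..int a}"
    then have "q ^ nat ((i + 1)\<^sup>2) * (q\<^sup>2) ^ nat (int a - i) = q ^ (2 * a + 1) * q ^ nat (i\<^sup>2)"
      by (intro power_square_shift) simp
    moreover have "z powi (i + 1) = z * z powi i"
      using z by (simp add: power_int_add)
    moreover have "nat (n + 1 - (int b + (i + 1))) = nat (int a - i)"
      by (simp add: n_def)
    ultimately show "g (i + 1) = z * q ^ (2 * a + 1) * f i"
      by (simp add: g_def f_def mult_ac)
  qed
  also have "\<dots> = z * q ^ (2 * a + 1) * jacobi_sum q z a b"
    by (simp add: jacobi_sum_def f_def n_def sum_distrib_left)
  finally show ?thesis
    by (simp add: algebra_simps)
qed

lemma jacobi_sum_0_right:
  assumes "norm q < 1" "z \<noteq> 0"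
  shows "jacobi_sum q z a 0 = (\<Prod>k<a. 1 + z * q ^ (2 * k + 1))"
proof (induction a)
  case 0
  show ?case
    using qbinom_0_right[OF norm_power2_less_one[OF assms(1)], of 0] by (simp add: jacobi_sum_def)
next
  case (Suc a)
  then show ?case
    using jacobi_sum_Suc[OF assms, of a 0] by (simp add: lessThan_Suc mult_ac)
qed

lemma jacobi_sum_0_left:
  assumes "norm q < 1" "z \<noteq> 0"
  shows "jacobi_sum q z 0 b = (\<Prod>k<b. 1 + q ^ (2 * k + 1) / z)"
proof -
  have "jacobi_sum q z 0 b =
      (\<Sum>j\<in>{- int b..- 0}. z powi j * q ^ nat (j\<^sup>2) * qbinom (q\<^sup>2) (int b) (int b + j))"
    by (simp add: jacobi_sum_def)
  also have "\<dots> = (\<Sum>i\<in>{0..int b}.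
      z powi (- i) * q ^ nat ((- i)\<^sup>2) * qbinom (q\<^sup>2) (int b) (int b - i))"
    by (subst sum_int_mirror) simp
  also have "\<dots> = jacobi_sum q (inverse z) b 0"
    unfolding jacobi_sum_def
    by (intro sum.cong) (simp_all add: power_int_minus power_int_inverse qbinom_symmetric)
  also have "\<dots> = (\<Prod>k<b. 1 + q ^ (2 * k + 1) / z)"
    using assms by (simp add: jacobi_sum_0_right divide_inverse mult.commute)
  finally show ?thesis .
qed

theorem finite_jacobi_triple_product:
  assumes "norm q < 1" "z \<noteq> 0"
  shows "jacobi_sum q z a b = (\<Prod>k<a. 1 + z * q ^ (2 * k + 1)) * (\<Prod>k<b. 1 + q ^ (2 * k + 1) / z)"
proof (induction a)
  case 0
  show ?case
    using jacobi_sum_0_left[OF assms] by simp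
next
  case (Suc a)
  then show ?case
    using jacobi_sum_Suc[OF assms, of a b] by (simp add: lessThan_Suc mult_ac)
qed

section \<open>Cube roots of unity and the character modulo 3\<close>

definition omega :: complex where
  "omega = Complex (-1/2) (sqrt 3 / 2)"

lemma omega_squared: "omega\<^sup>2 = Complex (-1/2) (- sqrt 3 / 2)"
  by (simp add: omega_def power2_eq_square complex_eq_iff)

lemma omega_cube: "omega ^ 3 = 1"
proof -
  have "omega ^ 3 = omega\<^sup>2 * omega"
    by (simp add: power3_eq_cube power2_eq_square)
  then show ?thesis
    by (simp only: omega_squared) (simp add: omega_def complex_eq_iff)
qed

lemma omega_plus_omega_squared: "omega + omega\<^sup>2 = -1"
  by (simp only: omega_squared) (simp add: omega_def complex_eq_iff)

lemma omega_minus_omega_squared_nonzero: "omega - omega\<^sup>2 \<noteq> 0"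
  by (simp only: omega_squared) (simp add: omega_def complex_eq_iff)

lemma omega_nonzero: "omega \<noteq> 0"
  by (simp add: omega_def complex_eq_iff)

lemma inverse_omega: "inverse omega = omega\<^sup>2"
  using omega_cube omega_nonzero by (simp add: field_simps power3_eq_cube power2_eq_square)

lemma inverse_omega_squared: "inverse (omega\<^sup>2) = omega"
  using omega_cube omega_nonzero by (simp add: field_simps power3_eq_cube power2_eq_square)

lemma omega_powi: "omega powi j = omega ^ nat (j mod 3)"
proof -
  have "omega powi j = omega powi (3 * (j div 3)) * omega powi (j mod 3)"
    using omega_nonzero by (metis div_mult_mod_eq mult.commute power_int_add)
  also have "omega powi (3 * (j div 3)) = 1"
    by (simp add: power_int_mult omega_cube)
  finally show ?thesis
    by (simp add: power_int_def)
qed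

lemma omega_factorization: "(1 - omega * x) * (1 - omega\<^sup>2 * x) = 1 + x + x\<^sup>2"
proof -
  have "(1 - omega * x) * (1 - omega\<^sup>2 * x) = 1 - (omega + omega\<^sup>2) * x + omega ^ 3 * x\<^sup>2"
    by (simp add: algebra_simps power2_eq_square power3_eq_cube)
  then show ?thesis
    by (simp add: omega_plus_omega_squared omega_cube)
qed

lemma Legendre_3: "Legendre j 3 = (if j mod 3 = 0 then 0 else if j mod 3 = 1 then 1 else -1)"
proof -
  have square_mod_3: "y\<^sup>2 mod 3 \<in> {0, 1}" for y :: int
  proof -
    have "y mod 3 \<in> {0, 1, 2}"
      by auto
    moreover have "y\<^sup>2 mod 3 = (y mod 3)\<^sup>2 mod 3"
      by (simp add: power_mod)
    ultimately show ?thesis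
      by auto
  qed
  have "QuadRes 3 j" if "j mod 3 = 1"
    using that unfolding QuadRes_def cong_def by (intro exI[of _ 1]) simp
  moreover have "\<not> QuadRes 3 j" if j: "j mod 3 = 2"
  proof
    assume "QuadRes 3 j"
    then obtain y :: int where "y\<^sup>2 mod 3 = 2"
      using j unfolding QuadRes_def cong_def by auto
    with square_mod_3[of y] show False
      by simp
  qed
  moreover have "j mod 3 \<in> {0, 1, 2}"
    by auto
  ultimately show ?thesis
    unfolding Legendre_def cong_def by auto
qed

lemma omega_powi_difference:
  "(- omega) powi j - (- omega\<^sup>2) powi j = (-1) powi j * of_int (Legendre j 3) * (omega - omega\<^sup>2)"
proof -
  have "(- omega) powi j = (-1) powi j * omega powi j"
    by (metis mult_minus1 power_int_mult_distrib)
  moreover have "(- omega\<^sup>2) powi j = (-1) powi j * omega powi (2 * j)"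
    by (metis mult_minus1 power_int_mult_distrib power_int_mult power_int_of_nat
        of_nat_numeral mult.commute)
  ultimately have "(- omega) powi j - (- omega\<^sup>2) powi j =
      (-1) powi j * (omega powi j - omega powi (2 * j))"
    by (simp add: right_diff_distrib)
  also have "omega powi j - omega powi (2 * j) = of_int (Legendre j 3) * (omega - omega\<^sup>2)"
  proof -
    have "j mod 3 \<in> {0, 1, 2}"
      by auto
    moreover have "(2 * j) mod 3 = (2 * (j mod 3)) mod 3"
      by (simp add: mod_mult_right_eq)
    ultimately show ?thesis
      unfolding omega_powi Legendre_3
      using omega_cube by (auto simp: power2_eq_square power3_eq_cube)
  qed
  finally show ?thesis
    by (simp only: mult.assoc)
qed

lemma jacobi_sum_odd:
  "jacobi_sum q z L (Suc L) = (\<Sum>j\<in>{- int L - 1..int L}.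
     z powi j * q ^ nat (j\<^sup>2) * qbinom (q\<^sup>2) (2 * int L + 1) (int L - j))"
proof -
  have "int (Suc L) + j = (2 * int L + 1) - (int L - j)" for j
    by simp
  then have "qbinom (q\<^sup>2) (2 * int L + 1) (int (Suc L) + j) =
      qbinom (q\<^sup>2) (2 * int L + 1) (int L - j)"
    for j
    by (simp only: qbinom_symmetric)
  moreover have "int (L + Suc L) = 2 * int L + 1" "- int (Suc L) = - int L - 1"
    by simp_all
  ultimately show ?thesis
    unfolding jacobi_sum_def by (simp only:)
qed

text \<open>The factors pair up by \<open>(1 - \<omega>x)(1 - \<omega>^2 x) = 1 + x + x^2\<close>.\<close>
lemma jacobi_sum_cube_root:
  assumes q: "norm q < 1" and c: "c = omega \<or> c = omega\<^sup>2"
  shows "jacobi_sum q (- c) L (Suc L) =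
    (\<Prod>k<L. 1 + q ^ (2 * k + 1) + (q ^ (2 * k + 1))\<^sup>2) * (1 - inverse c * q ^ (2 * L + 1))"
proof -
  have "c \<noteq> 0"
    using c omega_nonzero by auto
  have factor: "(1 - c * x) * (1 - inverse c * x) = 1 + x + x\<^sup>2" for x
    using c omega_factorization[of x]
    by (auto simp: inverse_omega inverse_omega_squared mult.commute)
  have "jacobi_sum q (- c) L (Suc L) = (\<Prod>k<L. (1 - c * q ^ (2 * k + 1)) *
      (1 - inverse c * q ^ (2 * k + 1))) * (1 - inverse c * q ^ (2 * L + 1))"
    using finite_jacobi_triple_product[OF q, of "- c" L "Suc L"] \<open>c \<noteq> 0\<close>
    by (simp add: prod.distrib divide_inverse mult_ac)
  then show ?thesis
    by (simp only: factor)
qed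

text \<open>The difference of the Jacobi triple products at \<open>z = -\<omega>\<close> and \<open>z = -\<omega>^2\<close>
  sees only the residue of \<open>j\<close> modulo 3.\<close>
theorem sum_Legendre_qbinom:
  assumes q: "norm q < 1"
  shows "(\<Sum>j\<in>{- int L - 1..int L}. (-1) powi j * of_int (Legendre j 3) * q ^ nat (j\<^sup>2)
            * qbinom (q\<^sup>2) (2 * int L + 1) (int L - j))
    = q ^ (2 * L + 1) * (\<Prod>k<L. 1 + q ^ (2 * k + 1) + (q ^ (2 * k + 1))\<^sup>2)"
    (is "?S = _")
proof -
  have "(omega - omega\<^sup>2) * ?S =
      jacobi_sum q (- omega) L (Suc L) - jacobi_sum q (- omega\<^sup>2) L (Suc L)"
    unfolding jacobi_sum_odd sum_distrib_left sum_subtractf[symmetric]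
    by (intro sum.cong refl) (simp add: left_diff_distrib[symmetric] omega_powi_difference mult_ac)
  also have "\<dots> = (omega - omega\<^sup>2) *
      (q ^ (2 * L + 1) * (\<Prod>k<L. 1 + q ^ (2 * k + 1) + (q ^ (2 * k + 1))\<^sup>2))"
    by (simp add: jacobi_sum_cube_root[OF q] inverse_omega inverse_omega_squared algebra_simps)
  finally show ?thesis
    using omega_minus_omega_squared_nonzero by simp
qed

section \<open>The Bailey lemma\<close>

text \<open>A q-analogue of \<open>\<Sum>_k C(n,k) a^k (1 - a)^(n-k) = 1\<close>.\<close>
definition qbinomial_weight_sum :: "complex \<Rightarrow> nat \<Rightarrow> complex \<Rightarrow> complex" where
  "qbinomial_weight_sum p n a =
     (\<Sum>k = 0..n. qbinom p (int n) (int k) * a ^ k * p ^ (k\<^sup>2) * qpoch (a * p ^ (k + 1)) p (n - k))"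

lemma qbinomial_weight_sum_Suc:
  assumes p: "norm p < 1"
  shows "qbinomial_weight_sum p (Suc n) a = qbinomial_weight_sum p n (a * p)"
proof -
  define A where "A k = p ^ k * qbinom p (int n) (int k) * a ^ k * p ^ (k\<^sup>2) *
    qpoch (a * p ^ (k + 1)) p (Suc n - k)" for k
  define B where "B k = qbinom p (int n) (int k - 1) * a ^ k * p ^ (k\<^sup>2) *
    qpoch (a * p ^ (k + 1)) p (Suc n - k)" for k
  define C where "C k = qbinom p (int n) (int k) * (a * p) ^ k * p ^ (k\<^sup>2) *
    qpoch (a * p * p ^ (k + 1)) p (n - k)" for k
  have "qbinom p (int (Suc n)) (int k) =
      p ^ k * qbinom p (int n) (int k) + qbinom p (int n) (int k - 1)"
    for k
    using qbinom_pascal'[OF p, of "int n" "int k"] by (simp add: add.commute)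
  then have "qbinomial_weight_sum p (Suc n) a = (\<Sum>k = 0..Suc n. A k) + (\<Sum>k = 0..Suc n. B k)"
    unfolding qbinomial_weight_sum_def A_def B_def sum.distrib[symmetric]
    by (intro sum.cong refl) (simp add: algebra_simps)
  also have "(\<Sum>k = 0..Suc n. A k) = (\<Sum>k = 0..n. C k * (1 - a * p ^ (k + 1)))"
  proof -
    have "A (Suc n) = 0"
      by (simp add: A_def qbinom_eq_0)
    moreover have "A k = C k * (1 - a * p ^ (k + 1))" if "k \<le> n" for k
    proof -
      have "Suc n - k = Suc (n - k)"
        using that by simp
      then show ?thesis
        by (simp add: A_def C_def qpoch_Suc_left power_mult_distrib mult_ac)
    qed
    ultimately show ?thesis
      by simp
  qed
  also have "(\<Sum>k = 0..Suc n. B k) = (\<Sum>k = 0..n. C k * (a * p ^ (k + 1)))"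
  proof -
    have "B 0 = 0"
      by (simp add: B_def qbinom_eq_0)
    moreover have "B (Suc k) = C k * (a * p ^ (k + 1))" for k
    proof -
      have "p ^ ((Suc k)\<^sup>2) = p ^ (k\<^sup>2) * p ^ k * p ^ (k + 1)"
        by (simp add: power2_eq_square power_add[symmetric] algebra_simps)
      then show ?thesis
        by (simp add: B_def C_def power_mult_distrib mult_ac)
    qed
    ultimately show ?thesis
      by (simp only: sum.atLeast0_atMost_Suc_shift) simp
  qed
  also have "(\<Sum>k = 0..n. C k * (1 - a * p ^ (k + 1))) + (\<Sum>k = 0..n. C k * (a * p ^ (k + 1)))
      = qbinomial_weight_sum p n (a * p)"
    by (simp add: qbinomial_weight_sum_def C_def sum.distrib[symmetric] algebra_simps)
  finally show ?thesis .
qed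

lemma qbinomial_weight_sum_eq_1:
  assumes "norm p < 1"
  shows "qbinomial_weight_sum p n a = 1"
proof (induction n arbitrary: a)
  case 0
  then show ?case
    using qbinom_0_right[OF assms, of 0] by (simp add: qbinomial_weight_sum_def)
next
  case (Suc n)
  then show ?case
    using qbinomial_weight_sum_Suc[OF assms] by simp
qed

text \<open>Multiplied by \<open>(p;p)_n (p^(2r+2);p)_n (p;p)_(2r+1)\<close>, this is
  \<open>qbinomial_weight_sum p n (p^(2r+1))\<close>.\<close>
lemma bailey_kernel_nat:
  assumes p: "norm p < 1"
  shows "(\<Sum>k = 0..n. p ^ (k\<^sup>2 + (2 * r + 1) * k) * inverse (qpoch p p (n - k))
            * inverse (qpoch p p k) * inverse (qpoch p p (k + 2 * r + 1)))
       = inverse (qpoch p p n) * inverse (qpoch p p (n + 2 * r + 1))"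
proof -
  define a where "a = p ^ (2 * r + 1)"
  define P where "P m = qpoch p p m" for m
  define Q where "Q m = qpoch (a * p) p m" for m
  define R where "R k = qpoch (a * p ^ (k + 1)) p (n - k)" for k
  have Pnz: "P m \<noteq> 0" for m
    unfolding P_def using p by (rule qpoch_self_nonzero)
  have ap: "a * p = p ^ Suc (2 * r + 1)"
    by (simp add: a_def mult.commute)
  have Qnz: "Q m \<noteq> 0" for m
    unfolding Q_def ap using p by (intro qpoch_nonzero[OF norm_power_Suc_less_one]) auto
  have apk: "a * p ^ (k + 1) = p ^ Suc (2 * r + 1 + k)" for k
    by (simp add: a_def power_add)
  have Rnz: "R k \<noteq> 0" for k
    unfolding R_def apk using p by (intro qpoch_nonzero[OF norm_power_Suc_less_one]) auto
  have PQ: "P (k + 2 * r + 1) = P (2 * r + 1) * Q k" for k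
    using qpoch_add[of p p "2 * r + 1" k] unfolding P_def Q_def a_def
    by (simp add: add_ac mult.commute)
  have QR: "Q n = Q k * R k" if "k \<le> n" for k
    using qpoch_add[of "a * p" p k "n - k"] that unfolding Q_def R_def
    by (simp add: mult_ac power_add)
  have "p ^ (k\<^sup>2 + (2 * r + 1) * k) * inverse (P (n - k)) * inverse (P k)
      * inverse (P (k + 2 * r + 1))
      = qbinom p (int n) (int k) * a ^ k * p ^ (k\<^sup>2) * R k / (P n * Q n * P (2 * r + 1))"
    if "k \<le> n" for k
  proof -
    have "qbinom p (int n) (int k) = P n / (P k * P (n - k))"
      using that unfolding P_def by (rule qbinom_of_nat)
    moreover have "a ^ k = p ^ ((2 * r + 1) * k)"
      unfolding a_def by (rule power_mult[symmetric])
    then have "p ^ (k\<^sup>2 + (2 * r + 1) * k) = a ^ k * p ^ (k\<^sup>2)"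
      unfolding power_add by (simp only: mult.commute)
    ultimately show ?thesis
      unfolding PQ QR[OF that] using Pnz Qnz Rnz by (simp add: field_simps)
  qed
  then have "(\<Sum>k = 0..n. p ^ (k\<^sup>2 + (2 * r + 1) * k) * inverse (P (n - k)) * inverse (P k)
        * inverse (P (k + 2 * r + 1)))
      = qbinomial_weight_sum p n a / (P n * Q n * P (2 * r + 1))"
    unfolding qbinomial_weight_sum_def R_def sum_divide_distrib by (intro sum.cong refl) auto
  also have "\<dots> = inverse (P n) * inverse (P (n + 2 * r + 1))"
    using PQ[of n] Pnz Qnz by (simp add: qbinomial_weight_sum_eq_1[OF p] field_simps add_ac)
  finally show ?thesis
    unfolding P_def .
qed

lemma bailey_kernel_nonneg:
  assumes p: "norm p < 1"
  shows "(\<Sum>M = 0..L. p ^ (M\<^sup>2 + M) * inv_qfact p (int L - int M)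
            * inv_qfact p (int M - int r) * inv_qfact p (int M + int r + 1))
     = p ^ (r\<^sup>2 + r) * inv_qfact p (int L - int r) * inv_qfact p (int L + int r + 1)"
proof (cases "r \<le> L")
  case False
  then show ?thesis
    by (auto simp: inv_qfact_neg intro!: sum.neutral)
next
  case True
  define n where "n = L - r"
  define f where "f M = p ^ (M\<^sup>2 + M) * inv_qfact p (int L - int M)
    * inv_qfact p (int M - int r) * inv_qfact p (int M + int r + 1)" for M
  have "(\<Sum>M = 0..L. f M) = (\<Sum>M = r..L. f M)"
    by (rule sum.mono_neutral_right) (auto simp: f_def inv_qfact_neg)
  also have "\<dots> = (\<Sum>k = 0..n. f (k + r))"
    using sum.shift_bounds_cl_nat_ivl[of f 0 r n] True by (simp add: n_def)
  also have "\<dots> = p ^ (r\<^sup>2 + r) * (\<Sum>k = 0..n. p ^ (k\<^sup>2 + (2 * r + 1) * k)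
      * inverse (qpoch p p (n - k)) * inverse (qpoch p p k) * inverse (qpoch p p (k + 2 * r + 1)))"
    unfolding sum_distrib_left
  proof (intro sum.cong refl)
    fix k
    assume "k \<in> {0..n}"
    then have "int L - int (k + r) = int (n - k)"
      using True by (simp add: n_def)
    moreover have "int (k + r) + int r + 1 = int (k + 2 * r + 1)"
      by simp
    moreover have "(k + r)\<^sup>2 + (k + r) = (r\<^sup>2 + r) + (k\<^sup>2 + (2 * r + 1) * k)"
      by (simp add: power2_eq_square algebra_simps)
    ultimately show "f (k + r) = p ^ (r\<^sup>2 + r) * (p ^ (k\<^sup>2 + (2 * r + 1) * k)
        * inverse (qpoch p p (n - k)) * inverse (qpoch p p k)
        * inverse (qpoch p p (k + 2 * r + 1)))"
      unfolding f_def by (simp only: inv_qfact_of_nat power_add) (simp add: mult_ac)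
  qed
  also have "\<dots> = p ^ (r\<^sup>2 + r) * inv_qfact p (int L - int r) * inv_qfact p (int L + int r + 1)"
  proof -
    have "int L - int r = int n" "int L + int r + 1 = int (n + 2 * r + 1)"
      using True by (simp_all add: n_def)
    then show ?thesis
      unfolding bailey_kernel_nat[OF p] by (simp only: inv_qfact_of_nat mult.assoc)
  qed
  finally show ?thesis
    unfolding f_def .
qed

text \<open>Negative \<open>j\<close> reduce to \<open>-1 - j \<ge> 0\<close>, which swaps the last two factors.\<close>
lemma bailey_kernel:
  assumes p: "norm p < 1"
  shows "(\<Sum>M = 0..L. p ^ (M\<^sup>2 + M) * inv_qfact p (int L - int M)
            * inv_qfact p (int M - j) * inv_qfact p (int M + j + 1))
     = p ^ nat (j\<^sup>2 + j) * inv_qfact p (int L - j) * inv_qfact p (int L + j + 1)"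
proof (cases "j \<ge> 0")
  case True
  then obtain r where r: "j = int r"
    by (metis nonneg_eq_int)
  then have "nat (j\<^sup>2 + j) = r\<^sup>2 + r"
    by (simp add: nat_add_distrib nat_power_eq)
  then show ?thesis
    using bailey_kernel_nonneg[OF p, of L r] r by simp
next
  case False
  define r where "r = nat (- j - 1)"
  have r: "j = - int r - 1"
    using False by (simp add: r_def)
  have "j\<^sup>2 + j = int (r\<^sup>2 + r)"
    unfolding r by (simp add: power2_eq_square algebra_simps)
  then have "nat (j\<^sup>2 + j) = r\<^sup>2 + r"
    by (simp only: nat_int)
  moreover have "int M - j = int M + int r + 1" "int M + j + 1 = int M - int r" for M
    by (simp_all add: r)
  ultimately show ?thesis
    using bailey_kernel_nonneg[OF p, of L r] by (simp only:) (simp add: mult_ac)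
qed

text \<open>A two-sided form of the Bailey pair relation relative to \<open>a = p\<close>: the terms \<open>j\<close> and
  \<open>-1 - j\<close> share their denominator, and \<open>(p;p)_(L+j+1) = (1 - p) (p^2;p)_(L+j)\<close>.\<close>
definition bailey_beta :: "complex \<Rightarrow> (int \<Rightarrow> complex) \<Rightarrow> nat \<Rightarrow> complex" where
  "bailey_beta p \<alpha> L =
     (\<Sum>j\<in>{- int L - 1..int L}. \<alpha> j * inv_qfact p (int L - j) * inv_qfact p (int L + j + 1))"

text \<open>The Bailey lemma with \<open>\<rho>_1, \<rho>_2 \<rightarrow> \<infinity>\<close> and \<open>a = p\<close> maps \<open>\<beta>\<close> to \<open>bailey_step p \<beta>\<close>.\<close>
definition bailey_step :: "complex \<Rightarrow> (nat \<Rightarrow> complex) \<Rightarrow> nat \<Rightarrow> complex" where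
  "bailey_step p \<beta> L = (\<Sum>M = 0..L. p ^ (M\<^sup>2 + M) * inv_qfact p (int L - int M) * \<beta> M)"

lemma bailey_beta_extend:
  assumes "L \<le> K"
  shows "bailey_beta p \<alpha> L =
    (\<Sum>j\<in>{- int K - 1..int K}. \<alpha> j * inv_qfact p (int L - j) * inv_qfact p (int L + j + 1))"
  unfolding bailey_beta_def using assms by (intro sum.mono_neutral_left) (auto simp: inv_qfact_neg)

theorem bailey_lemma:
  assumes p: "norm p < 1"
  shows "bailey_step p (bailey_beta p \<alpha>) L = bailey_beta p (\<lambda>j. p ^ nat (j\<^sup>2 + j) * \<alpha> j) L"
proof -
  have "bailey_step p (bailey_beta p \<alpha>) L = (\<Sum>M = 0..L. p ^ (M\<^sup>2 + M) * inv_qfact p (int L - int M)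
      * (\<Sum>j\<in>{- int L - 1..int L}. \<alpha> j * inv_qfact p (int M - j) * inv_qfact p (int M + j + 1)))"
    unfolding bailey_step_def by (intro sum.cong refl) (simp add: bailey_beta_extend)
  also have "\<dots> = (\<Sum>j\<in>{- int L - 1..int L}. \<alpha> j * (\<Sum>M = 0..L. p ^ (M\<^sup>2 + M)
      * inv_qfact p (int L - int M) * inv_qfact p (int M - j) * inv_qfact p (int M + j + 1)))"
    unfolding sum_distrib_left by (subst sum.swap) (simp add: mult_ac)
  also have "\<dots> = bailey_beta p (\<lambda>j. p ^ nat (j\<^sup>2 + j) * \<alpha> j) L"
    unfolding bailey_beta_def bailey_kernel[OF p] by (simp add: mult_ac)
  finally show ?thesis .
qed

corollary bailey_chain:
  assumes "norm p < 1"
  shows "(bailey_step p ^^ v) (bailey_beta p \<alpha>) = bailey_beta p (\<lambda>j. p ^ (v * nat (j\<^sup>2 + j)) * \<alpha> j)"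
proof (induction v)
  case 0
  show ?case
    by simp
next
  case (Suc v)
  then have "(bailey_step p ^^ Suc v) (bailey_beta p \<alpha>) =
      bailey_beta p (\<lambda>j. p ^ nat (j\<^sup>2 + j) * (p ^ (v * nat (j\<^sup>2 + j)) * \<alpha> j))"
    using bailey_lemma[OF assms] by auto
  then show ?case
    by (simp add: power_add mult_ac)
qed

section \<open>The Bailey pair behind the identity\<close>

definition base_alpha :: "complex \<Rightarrow> int \<Rightarrow> complex" where
  "base_alpha q j = (-1) powi j * of_int (Legendre j 3) * q powi (j\<^sup>2 - 1)"

definition base_beta :: "complex \<Rightarrow> nat \<Rightarrow> complex" where
  "base_beta q m =
     (q\<^sup>2) ^ m * (qpoch (q ^ 3) (q ^ 6) m / qpoch q (q\<^sup>2) m) / qpoch (q\<^sup>2) (q\<^sup>2) (2 * m + 1)"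

lemma qpoch_cube_ratio:
  assumes "norm q < 1"
  shows "qpoch (q ^ 3) (q ^ 6) L / qpoch q (q\<^sup>2) L =
    (\<Prod>k<L. 1 + q ^ (2 * k + 1) + (q ^ (2 * k + 1))\<^sup>2)"
proof -
  have "qpoch q (q\<^sup>2) L \<noteq> 0"
    using assms by (intro qpoch_nonzero) (auto simp: norm_power power_le_one)
  moreover have "qpoch (q ^ 3) (q ^ 6) L =
      qpoch q (q\<^sup>2) L * (\<Prod>k<L. 1 + q ^ (2 * k + 1) + (q ^ (2 * k + 1))\<^sup>2)"
    unfolding qpoch_def prod.distrib[symmetric]
  proof (intro prod.cong refl)
    fix k
    have "q ^ 3 * (q ^ 6) ^ k = q ^ (3 + 6 * k)"
      by (simp add: power_add flip: power_mult)
    also have "\<dots> = (q ^ (2 * k + 1)) ^ 3"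
      unfolding power_mult[symmetric] by (simp add: algebra_simps)
    finally have "q ^ 3 * (q ^ 6) ^ k = (q ^ (2 * k + 1)) ^ 3" .
    moreover have "q * (q\<^sup>2) ^ k = q ^ (2 * k + 1)"
      by (simp add: power_mult)
    moreover have "1 - x ^ 3 = (1 - x) * (1 + x + x\<^sup>2)" for x :: complex
      by (simp add: algebra_simps power2_eq_square power3_eq_cube)
    ultimately show "1 - q ^ 3 * (q ^ 6) ^ k =
        (1 - q * (q\<^sup>2) ^ k) * (1 + q ^ (2 * k + 1) + (q ^ (2 * k + 1))\<^sup>2)"
      by (simp only:)
  qed
  ultimately show ?thesis
    by simp
qed

lemma base_bailey_pair_nonzero:
  assumes q: "norm q < 1" and "q \<noteq> 0"
  shows "bailey_beta (q\<^sup>2) (base_alpha q) L = base_beta q L"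
proof -
  define P where "P = qpoch (q\<^sup>2) (q\<^sup>2) (2 * L + 1)"
  have alpha: "q * base_alpha q j = (-1) powi j * of_int (Legendre j 3) * q ^ nat (j\<^sup>2)" for j
  proof -
    have "q * q powi (j\<^sup>2 - 1) = q ^ nat (j\<^sup>2)"
      using power_int_add[of q 1 "j\<^sup>2 - 1"] \<open>q \<noteq> 0\<close> by (simp add: power_int_def)
    then show ?thesis
      by (simp add: base_alpha_def mult_ac)
  qed
  have "q * P * bailey_beta (q\<^sup>2) (base_alpha q) L = (\<Sum>j\<in>{- int L - 1..int L}.
      (q * base_alpha q j) * (P * inv_qfact (q\<^sup>2) (int L - j) * inv_qfact (q\<^sup>2) (int L + j + 1)))"
    unfolding bailey_beta_def sum_distrib_left by (intro sum.cong refl) (simp only: mult_ac)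
  also have "\<dots> = (\<Sum>j\<in>{- int L - 1..int L}. (-1) powi j * of_int (Legendre j 3) * q ^ nat (j\<^sup>2)
        * qbinom (q\<^sup>2) (2 * int L + 1) (int L - j))"
    unfolding alpha qbinom_odd_conv_inv_qfact P_def by (simp only: mult.assoc)
  also have "\<dots> = q * P * base_beta q L"
    unfolding sum_Legendre_qbinom[OF q] base_beta_def qpoch_cube_ratio[OF q] P_def
    using qpoch_self_nonzero[OF norm_power2_less_one[OF q]]
    by (simp add: power_mult[symmetric] mult_ac)
  finally show ?thesis
    using \<open>q \<noteq> 0\<close> qpoch_self_nonzero[OF norm_power2_less_one[OF q]] by (simp add: P_def)
qed

text \<open>Both sides of \<open>sum_Legendre_qbinom\<close> carry an extra factor \<open>q\<close>, so \<open>q = 0\<close>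
  is checked directly.\<close>
lemma base_bailey_pair_zero: "bailey_beta 0 (base_alpha 0) L = base_beta 0 L"
proof -
  have "base_alpha 0 j * inv_qfact 0 (int L - j) * inv_qfact 0 (int L + j + 1) =
      (if j = -1 then 1 else 0) + (if j = 1 then -1 else 0)" if "j \<in> {- int L - 1..int L}" for j
  proof -
    have "j\<^sup>2 - 1 = (j - 1) * (j + 1)"
      by (simp add: power2_eq_square algebra_simps)
    then have "j\<^sup>2 - 1 = 0 \<longleftrightarrow> j = 1 \<or> j = -1"
      by auto
    then show ?thesis
      using that
      by (auto simp: base_alpha_def inv_qfact_def qpoch_0_left Legendre_3 power_int_0_left_if)
  qed
  then have "bailey_beta 0 (base_alpha 0) L =
      (\<Sum>j\<in>{- int L - 1..int L}. (if j = -1 then 1 else 0) + (if j = 1 then -1 else 0))"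
    unfolding bailey_beta_def by (intro sum.cong) auto
  also have "\<dots> = 1 + (if L \<ge> 1 then -1 else 0)"
    by (simp add: sum.distrib)
  also have "\<dots> = base_beta 0 L"
    by (cases L) (simp_all add: base_beta_def qpoch_0_left)
  finally show ?thesis .
qed

lemma base_bailey_pair:
  "norm q < 1 \<Longrightarrow> bailey_beta (q\<^sup>2) (base_alpha q) L = base_beta q L"
  using base_bailey_pair_nonzero base_bailey_pair_zero by (cases "q = 0") simp_all

lemma chain_coefficient:
  "(-1) powi j * q powi ((2 * int v + 1) * j\<^sup>2 + 2 * int v * j - 1) * of_int (Legendre j 3)
     = (q\<^sup>2) ^ (v * nat (j\<^sup>2 + j)) * base_alpha q j"
proof (cases "j = 0")
  case True
  then show ?thesis
    by (simp add: base_alpha_def Legendre_3)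
next
  case False
  then have "1 \<le> j\<^sup>2"
    by (simp add: int_one_le_iff_zero_less)
  have "0 \<le> j * (j + 1)"
    unfolding zero_le_mult_iff by presburger
  then obtain m where m: "j\<^sup>2 + j = int m"
    by (metis nonneg_eq_int power2_eq_square distrib_left mult_1_right)
  have "(2 * int v + 1) * j\<^sup>2 + 2 * int v * j - 1 = (j\<^sup>2 - 1) + 2 * int v * (j\<^sup>2 + j)"
    by (simp add: algebra_simps)
  also have "\<dots> = int (nat (j\<^sup>2 - 1) + 2 * v * m)"
    using \<open>1 \<le> j\<^sup>2\<close> False by (simp add: m)
  finally have "q powi ((2 * int v + 1) * j\<^sup>2 + 2 * int v * j - 1) =
      q ^ (nat (j\<^sup>2 - 1) + 2 * v * m)"
    by (simp only: power_int_of_nat)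
  moreover have "j\<^sup>2 - 1 = int (nat (j\<^sup>2 - 1))"
    using \<open>1 \<le> j\<^sup>2\<close> False by simp
  then have "q powi (j\<^sup>2 - 1) = q ^ nat (j\<^sup>2 - 1)"
    by (metis power_int_of_nat)
  moreover have "(q\<^sup>2) ^ (v * nat (j\<^sup>2 + j)) = q ^ (2 * v * m)"
    by (simp add: m power_mult mult.assoc)
  ultimately show ?thesis
    by (simp add: base_alpha_def power_add mult_ac)
qed

lemma bailey_beta_chain_eq_theta_sum:
  "qpoch (q\<^sup>2) (q\<^sup>2) (2 * L + 1)
     * bailey_beta (q\<^sup>2) (\<lambda>j. (q\<^sup>2) ^ (v * nat (j\<^sup>2 + j)) * base_alpha q j) L
   = (\<Sum>\<^sub>\<infinity>j :: int. (-1) powi j * q powi ((2 * int v + 1) * j\<^sup>2 + 2 * int v * j - 1)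
        * of_int (Legendre j 3) * qbinom (q\<^sup>2) (2 * int L + 1) (int L - j))"
  (is "_ = infsum ?H UNIV")
proof -
  have "qpoch (q\<^sup>2) (q\<^sup>2) (2 * L + 1)
      * bailey_beta (q\<^sup>2) (\<lambda>j. (q\<^sup>2) ^ (v * nat (j\<^sup>2 + j)) * base_alpha q j) L
      = (\<Sum>j\<in>{- int L - 1..int L}. ?H j)"
    unfolding bailey_beta_def sum_distrib_left chain_coefficient qbinom_odd_conv_inv_qfact
    by (simp only: mult_ac)
  also have "\<dots> = infsum ?H {- int L - 1..int L}"
    by simp
  also have "\<dots> = infsum ?H UNIV"
    by (rule infsum_cong_neutral) (auto simp: qbinom_eq_0)
  finally show ?thesis .
qed

section \<open>Unfolding the multiple sum\<close>

definition box_funs :: "nat \<Rightarrow> nat \<Rightarrow> (nat \<Rightarrow> nat) set" where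
  "box_funs v K = {n. (\<forall>i. i \<notin> {1..v} \<longrightarrow> n i = 0) \<and> (\<forall>i. n i \<le> K)}"

definition tail_sum :: "(nat \<Rightarrow> nat) \<Rightarrow> nat \<Rightarrow> nat \<Rightarrow> nat" where
  "tail_sum n v i = (\<Sum>k = i..v. n k)"

text \<open>For \<open>p = q^2\<close> and \<open>\<beta> = base_beta q\<close>, the summand on the left-hand side is
  \<open>(p;p)_(2L+1)\<close> times this; \<open>tail_sum n v i\<close> is \<open>N_i\<close>.\<close>
definition multisum_term :: "complex \<Rightarrow> nat \<Rightarrow> (nat \<Rightarrow> complex) \<Rightarrow> (nat \<Rightarrow> nat) \<Rightarrow> nat \<Rightarrow> complex" where
  "multisum_term p v \<beta> n L =
     p ^ (\<Sum>i = 1..v. tail_sum n v i * (tail_sum n v i + 1))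
     * (\<Prod>i = 1..v - 1. inverse (qpoch p p (n i))) * \<beta> (n v)
     * inv_qfact p (int L - int (tail_sum n v 1))"

definition fcons :: "nat \<Rightarrow> (nat \<Rightarrow> nat) \<Rightarrow> nat \<Rightarrow> nat" where
  "fcons m n i = (if i = 0 then 0 else if i = 1 then m else n (i - 1))"

definition ftail :: "(nat \<Rightarrow> nat) \<Rightarrow> nat \<Rightarrow> nat" where
  "ftail n i = (if i = 0 then 0 else n (Suc i))"

lemma finite_box_funs: "finite (box_funs v K)"
proof -
  have "box_funs v K \<subseteq> {f. \<forall>x. (x \<in> {1..v} \<longrightarrow> f x \<in> {0..K}) \<and> (x \<notin> {1..v} \<longrightarrow> f x = 0)}"
    unfolding box_funs_def by auto
  then show ?thesis
    by (rule finite_subset) (intro finite_set_of_finite_funs; simp)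
qed

lemma fcons_ftail: "n \<in> box_funs (Suc v) K \<Longrightarrow> fcons (n 1) (ftail n) = n"
  unfolding box_funs_def fcons_def ftail_def by (rule ext) (auto simp: Suc_pred)

lemma ftail_fcons: "n \<in> box_funs v K \<Longrightarrow> ftail (fcons m n) = n"
  unfolding box_funs_def fcons_def ftail_def by (rule ext) auto

lemma ftail_in_box_funs: "n \<in> box_funs (Suc v) K \<Longrightarrow> ftail n \<in> box_funs v K"
  unfolding box_funs_def ftail_def by auto

lemma fcons_in_box_funs: "m \<le> K \<Longrightarrow> n \<in> box_funs v K \<Longrightarrow> fcons m n \<in> box_funs (Suc v) K"
  unfolding box_funs_def fcons_def by (auto simp: Suc_le_eq)

lemma sum_box_funs_Suc:
  "(\<Sum>n\<in>box_funs (Suc v) K. F n) = (\<Sum>n\<in>box_funs v K. \<Sum>m = 0..K. F (fcons m n))"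
proof -
  have "(\<Sum>n\<in>box_funs (Suc v) K. F n) = (\<Sum>x\<in>{0..K} \<times> box_funs v K. F (fcons (fst x) (snd x)))"
  proof (rule sum.reindex_bij_witness
      [where i = "\<lambda>x. fcons (fst x) (snd x)" and j = "\<lambda>n. (n 1, ftail n)"])
    fix n
    assume n: "n \<in> box_funs (Suc v) K"
    moreover have "n 1 \<le> K"
      using n by (simp add: box_funs_def)
    ultimately show "fcons (fst (n 1, ftail n)) (snd (n 1, ftail n)) = n"
      "(n 1, ftail n) \<in> {0..K} \<times> box_funs v K"
      "F (fcons (fst (n 1, ftail n)) (snd (n 1, ftail n))) = F n"
      using fcons_ftail[OF n] ftail_in_box_funs[OF n] by simp_all
  next
    fix x
    assume "x \<in> {0..K} \<times> box_funs v K"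
    then show "(fcons (fst x) (snd x) 1, ftail (fcons (fst x) (snd x))) = x"
      "fcons (fst x) (snd x) \<in> box_funs (Suc v) K"
      by (auto simp: ftail_fcons fcons_in_box_funs fcons_def)
  qed
  also have "\<dots> = (\<Sum>m = 0..K. \<Sum>n\<in>box_funs v K. F (fcons m n))"
    by (simp add: sum.cartesian_product split_beta)
  also have "\<dots> = (\<Sum>n\<in>box_funs v K. \<Sum>m = 0..K. F (fcons m n))"
    by (rule sum.swap)
  finally show ?thesis .
qed

lemma sum_box_funs_1: "(\<Sum>n\<in>box_funs 1 K. F (n 1)) = (\<Sum>m = 0..K. F m)"
  by (rule sum.reindex_bij_witness[where i = "\<lambda>m k. if k = 1 then m else 0" and j = "\<lambda>n. n 1"])
    (auto simp: box_funs_def fun_eq_iff)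

lemma tail_sum_fcons_1: "tail_sum (fcons m n) (Suc v) 1 = m + tail_sum n v 1"
proof -
  have "tail_sum (fcons m n) (Suc v) 1 = fcons m n 1 + (\<Sum>k = Suc 1..Suc v. fcons m n k)"
    unfolding tail_sum_def by (subst sum.atLeast_Suc_atMost) auto
  also have "(\<Sum>k = Suc 1..Suc v. fcons m n k) = (\<Sum>k = 1..v. fcons m n (Suc k))"
    by (rule sum.shift_bounds_cl_Suc_ivl)
  finally show ?thesis
    by (simp add: tail_sum_def fcons_def)
qed

lemma tail_sum_fcons_Suc:
  assumes "1 \<le> i"
  shows "tail_sum (fcons m n) (Suc v) (Suc i) = tail_sum n v i"
proof -
  have "tail_sum (fcons m n) (Suc v) (Suc i) = (\<Sum>k = i..v. fcons m n (Suc k))"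
    unfolding tail_sum_def by (rule sum.shift_bounds_cl_Suc_ivl)
  also have "\<dots> = tail_sum n v i"
    unfolding tail_sum_def fcons_def using assms by (intro sum.cong) auto
  finally show ?thesis .
qed

lemma multisum_term_fcons:
  assumes "1 \<le> v"
  shows "multisum_term p (Suc v) \<beta> (fcons m n) L =
    p ^ ((m + tail_sum n v 1)\<^sup>2 + (m + tail_sum n v 1))
    * inv_qfact p (int L - int (m + tail_sum n v 1)) * multisum_term p v \<beta> n (m + tail_sum n v 1)"
proof -
  define N where "N = m + tail_sum n v 1"
  let ?T = "tail_sum (fcons m n) (Suc v)"
  have "(\<Sum>i = 1..Suc v. ?T i * (?T i + 1)) =
      ?T 1 * (?T 1 + 1) + (\<Sum>i = Suc 1..Suc v. ?T i * (?T i + 1))"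
    by (subst sum.atLeast_Suc_atMost) auto
  also have "(\<Sum>i = Suc 1..Suc v. ?T i * (?T i + 1)) = (\<Sum>i = 1..v. ?T (Suc i) * (?T (Suc i) + 1))"
    by (rule sum.shift_bounds_cl_Suc_ivl)
  also have "(\<Sum>i = 1..v. ?T (Suc i) * (?T (Suc i) + 1)) =
      (\<Sum>i = 1..v. tail_sum n v i * (tail_sum n v i + 1))"
    by (intro sum.cong refl) (simp add: tail_sum_fcons_Suc)
  finally have exponent: "(\<Sum>i = 1..Suc v. ?T i * (?T i + 1)) =
      N * (N + 1) + (\<Sum>i = 1..v. tail_sum n v i * (tail_sum n v i + 1))"
    by (simp only: N_def tail_sum_fcons_1)
  have "(\<Prod>i = 1..v. inverse (qpoch p p (fcons m n i))) =
      inverse (qpoch p p (fcons m n 1))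
      * (\<Prod>i = Suc 1..Suc (v - 1). inverse (qpoch p p (fcons m n i)))"
    using assms by (subst prod.atLeast_Suc_atMost) auto
  also have "(\<Prod>i = Suc 1..Suc (v - 1). inverse (qpoch p p (fcons m n i))) =
      (\<Prod>i = 1..v - 1. inverse (qpoch p p (fcons m n (Suc i))))"
    by (rule prod.shift_bounds_cl_Suc_ivl)
  finally have product: "(\<Prod>i = 1..Suc v - 1. inverse (qpoch p p (fcons m n i)))
      = inverse (qpoch p p m) * (\<Prod>i = 1..v - 1. inverse (qpoch p p (n i)))"
    by (simp add: fcons_def)
  have "fcons m n (Suc v) = n v" "int N - int (tail_sum n v 1) = int m"
    using assms by (simp_all add: fcons_def N_def)
  then show ?thesis
    unfolding multisum_term_def exponent product tail_sum_fcons_1 N_def[symmetric] inv_qfact_of_nat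
    by (simp add: power_add power2_eq_square algebra_simps)
qed

lemma sum_shift_vanishing:
  fixes h :: "nat \<Rightarrow> complex"
  assumes "L \<le> K" "\<And>M. L < M \<Longrightarrow> h M = 0" "\<And>M. M < c \<Longrightarrow> h M = 0"
  shows "(\<Sum>m = 0..K. h (m + c)) = (\<Sum>M = 0..L. h M)"
proof -
  have "(\<Sum>m = 0..K. h (m + c)) = (\<Sum>M = 0 + c..K + c. h M)"
    by (rule sum.shift_bounds_cl_nat_ivl[symmetric])
  also have "\<dots> = (\<Sum>M = 0..K + c. h M)"
    by (rule sum.mono_neutral_left) (auto intro: assms(3))
  also have "\<dots> = (\<Sum>M = 0..L. h M)"
    using assms(1) by (intro sum.mono_neutral_right) (auto intro: assms(2))
  finally show ?thesis .
qed

text \<open>Splitting off \<open>n_1\<close>, the sum over \<open>N_1 = n_1 + N_2\<close> is one application of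
  \<open>bailey_step\<close> to the sum in one variable fewer.\<close>
theorem sum_multisum_term:
  assumes "1 \<le> v" "L \<le> K"
  shows "(\<Sum>n\<in>box_funs v K. multisum_term p v \<beta> n L) = (bailey_step p ^^ v) \<beta> L"
  using assms
proof (induction v arbitrary: L rule: nat_induct_at_least)
  case base
  have "multisum_term p 1 \<beta> n L = p ^ ((n 1)\<^sup>2 + n 1) * inv_qfact p (int L - int (n 1)) * \<beta> (n 1)"
    for n
    by (simp add: multisum_term_def tail_sum_def power2_eq_square algebra_simps)
  then have "(\<Sum>n\<in>box_funs 1 K. multisum_term p 1 \<beta> n L) =
      (\<Sum>m = 0..K. p ^ (m\<^sup>2 + m) * inv_qfact p (int L - int m) * \<beta> m)"
    using sum_box_funs_1[where F = "\<lambda>m. p ^ (m\<^sup>2 + m) * inv_qfact p (int L - int m) * \<beta> m"] by simp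
  also have "\<dots> = bailey_step p \<beta> L"
    unfolding bailey_step_def using base
    by (intro sum.mono_neutral_right) (auto simp: inv_qfact_neg)
  finally show ?case
    by simp
next
  case (Suc v)
  define h where "h n M = p ^ (M\<^sup>2 + M) * inv_qfact p (int L - int M) * multisum_term p v \<beta> n M"
    for n M
  have "(\<Sum>n\<in>box_funs (Suc v) K. multisum_term p (Suc v) \<beta> n L) =
      (\<Sum>n\<in>box_funs v K. \<Sum>m = 0..K. h n (m + tail_sum n v 1))"
    unfolding sum_box_funs_Suc h_def using Suc.hyps by (simp add: multisum_term_fcons add.commute)
  also have "\<dots> = (\<Sum>n\<in>box_funs v K. \<Sum>M = 0..L. h n M)"
    using Suc.prems
    by (intro sum.cong refl sum_shift_vanishing)
      (simp_all add: h_def multisum_term_def inv_qfact_neg)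
  also have "\<dots> = (\<Sum>M = 0..L. p ^ (M\<^sup>2 + M) * inv_qfact p (int L - int M) *
      (\<Sum>n\<in>box_funs v K. multisum_term p v \<beta> n M))"
    unfolding h_def sum_distrib_left by (rule sum.swap)
  also have "\<dots> = bailey_step p ((bailey_step p ^^ v) \<beta>) L"
    unfolding bailey_step_def[of p "(bailey_step p ^^ v) \<beta>"] using Suc.prems by (simp add: Suc.IH)
  also have "\<dots> = (bailey_step p ^^ Suc v) \<beta> L"
    by simp
  finally show ?case .
qed

lemma infsum_multisum_term:
  "(\<Sum>\<^sub>\<infinity>n\<in>{n. \<forall>i. i \<notin> {1..v} \<longrightarrow> n i = 0}. c * multisum_term p v \<beta> n L)
     = c * (\<Sum>n\<in>box_funs v L. multisum_term p v \<beta> n L)"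
proof -
  have "(\<Sum>\<^sub>\<infinity>n\<in>{n. \<forall>i. i \<notin> {1..v} \<longrightarrow> n i = 0}. c * multisum_term p v \<beta> n L)
      = (\<Sum>\<^sub>\<infinity>n\<in>box_funs v L. c * multisum_term p v \<beta> n L)"
  proof (rule infsum_cong_neutral)
    fix n
    assume n: "n \<in> {n. \<forall>i. i \<notin> {1..v} \<longrightarrow> n i = 0} - box_funs v L"
    then obtain i where "L < n i"
      by (auto simp: box_funs_def not_le)
    moreover have "n i \<le> tail_sum n v 1"
      using n \<open>L < n i\<close> unfolding tail_sum_def box_funs_def by (intro member_le_sum) auto
    ultimately show "c * multisum_term p v \<beta> n L = 0"
      by (simp add: multisum_term_def inv_qfact_neg)
  qed (auto simp: box_funs_def)
  then show ?thesis
    by (simp add: finite_box_funs sum_distrib_left)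
qed

theorem mainTheorem17:
  fixes q :: complex and v L :: nat
  assumes "norm q < 1" and "v \<ge> 1"
  shows "(\<Sum>\<^sub>\<infinity> n \<in> {n :: nat \<Rightarrow> nat. \<forall>i. i \<notin> {1..v} \<longrightarrow> n i = 0}.
      let tq = q ^ 2; N = (\<lambda>i. \<Sum>k = i..v. n k) in
        tq ^ ((\<Sum>i = 1..v. N i * (N i + 1)) + n v)
        * (\<Prod>i = 1..v - 1. inverse (qpoch tq tq (n i)))
        / qpoch tq tq (2 * n v + 1)
        * (qpoch (q ^ 3) (q ^ 6) (n v) / qpoch q (q ^ 2) (n v))
        * (qpoch tq tq (2 * L + 1) * inv_qfact tq (int L - int (N 1))))
    = (\<Sum>\<^sub>\<infinity> j :: int.
        (-1) powi j * q powi ((2 * int v + 1) * j ^ 2 + 2 * int v * j - 1)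
        * of_int (Legendre j 3) * qbinom (q ^ 2) (2 * int L + 1) (int L - j))"
  (is "infsum ?F ?A = _")
proof -
  define P where "P = qpoch (q\<^sup>2) (q\<^sup>2) (2 * L + 1)"
  have base_pair: "base_beta q = bailey_beta (q\<^sup>2) (base_alpha q)"
    by (rule ext) (simp add: base_bailey_pair[OF assms(1)])
  have "?F n = P * multisum_term (q\<^sup>2) v (base_beta q) n L" for n
    unfolding multisum_term_def tail_sum_def base_beta_def Let_def P_def
    by (simp add: power_add divide_inverse mult_ac)
  then have "infsum ?F ?A = infsum (\<lambda>n. P * multisum_term (q\<^sup>2) v (base_beta q) n L) ?A"
    by (intro infsum_cong)
  also have "\<dots> = P * (\<Sum>n\<in>box_funs v L. multisum_term (q\<^sup>2) v (base_beta q) n L)"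
    by (rule infsum_multisum_term)
  also have "\<dots> = P * (bailey_step (q\<^sup>2) ^^ v) (bailey_beta (q\<^sup>2) (base_alpha q)) L"
    using assms by (simp add: sum_multisum_term base_pair)
  also have "\<dots> = P * bailey_beta (q\<^sup>2) (\<lambda>j. (q\<^sup>2) ^ (v * nat (j\<^sup>2 + j)) * base_alpha q j) L"
    by (simp add: bailey_chain norm_power2_less_one[OF assms(1)])
  finally show ?thesis
    unfolding P_def bailey_beta_chain_eq_theta_sum .
qed

end
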